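(* Let $M \ge 1$ be an integer, let $d>0$ be the antenna element spacing and $\lambda>0$ the wavelength of an $M$-element one-dimensional uniform linear array, and let $\mathcal{T}$ be a (measurable) set of possible angles of departure. Put $$\mathcal{P} = \left\{ \psi : \psi = 2\pi \tfrac{d}{\lambda}\sin(\theta),\ \theta\in\mathcal{T}\right\}, \qquad \mu(\mathcal{P}) = \int_{-\pi}^{\pi} \mathbf{1}(\psi\in\mathcal{P})\, d\psi ,$$ and let the array manifold be $\mathcal{A}=\{\mathbf{a}(\psi):\psi\in\mathcal{P}\}$ with $\mathbf{a}(\psi) = [1,\ e^{j\psi},\ \ldots,\ e^{j(M-1)\psi}]^T\in\mathbb{C}^M$. Let $\mathcal{F}_k=\{\mathbf{f}_1,\ldots,\mathbf{f}_{N_k}\}\subset\mathbb{C}^M$ be any codebook of $N_k$ unit-norm vectors (in particular, any subcodebook of analog beamformers whose entries are $\frac{1}{\sqrt M}e^{j\varphi_m}$ with quantized phases $\varphi_m$). Define $$\chi(\mathcal{F}_k) = \inf_{\mathbf{a}\in\mathcal{A}}\ \max_{\mathbf{f}\in\mathcal{F}_k} |\mathbf{f}^*\mathbf{a}|^2 ,$$ where, in computing the infimum, only $\psi\in\mathcal{P}\cap[-\pi,\pi]$ are considered. Then $$\chi(\mathcal{F}_k) \le \min\left( \frac{2\pi N_k}{\mu(\mathcal{P})},\ M\right),$$ with the convention $2\pi N_k/0=+\infty$.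
   Context: $\mathbf{f}^*$ denotes the conjugate transpose of $\mathbf{f}$, $\|\cdot\|$ the Euclidean norm, $j=\sqrt{-1}$, and $\mathbf{1}(\cdot)$ the indicator function. The quantity $\chi(\mathcal{F}_k)$ is the smallest (worst-case over directions in the array manifold) beamforming gain achievable by the best codeword of $\mathcal{F}_k$; the associated covering distance is $\delta(\mathcal{F}_k)=\sqrt{1-\chi(\mathcal{F}_k)/M}$. *)

theory Defs
  imports "HOL-Analysis.Analysis"
begin

text \<open>Vectors in C^M are represented as functions nat => complex, only indices m < M matter.\<close>

definition steer :: "nat \<Rightarrow> real \<Rightarrow> nat \<Rightarrow> complex" where
  "steer M \<psi> m = (if m < M then exp (\<i> * of_nat m * complex_of_real \<psi>) else 0)"

definition herm_inner :: "nat \<Rightarrow> (nat \<Rightarrow> complex) \<Rightarrow> (nat \<Rightarrow> complex) \<Rightarrow> complex" where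
  "herm_inner M f a = (\<Sum>m<M. cnj (f m) * a m)"

definition vnorm :: "nat \<Rightarrow> (nat \<Rightarrow> complex) \<Rightarrow> real" where
  "vnorm M f = sqrt (\<Sum>m<M. (cmod (f m))\<^sup>2)"

definition phase_set :: "real \<Rightarrow> real \<Rightarrow> real set \<Rightarrow> real set" where
  "phase_set d lam T = {\<psi>. \<exists>\<theta>\<in>T. \<psi> = 2 * pi * (d / lam) * sin \<theta>}"

definition mu_P :: "real set \<Rightarrow> real" where
  "mu_P P = measure lebesgue (P \<inter> {-pi..pi})"

definition chi :: "nat \<Rightarrow> real set \<Rightarrow> nat \<Rightarrow> (nat \<Rightarrow> nat \<Rightarrow> complex) \<Rightarrow> real" where
  "chi M P N f = Inf ((\<lambda>\<psi>. Max ((\<lambda>k. (cmod (herm_inner M (f k) (steer M \<psi>)))\<^sup>2) ` {..<N}))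
                      ` (P \<inter> {-pi..pi}))"

end

theory Submission imports Defs begin

text \<open>The beam gains \<open>|f\<^sub>k\<^sup>* a(\<psi>)|\<^sup>2\<close> are trigonometric polynomials, so by Parseval each of them
  integrates to \<open>2\<pi>\<close> over \<open>[-\<pi>,\<pi>]\<close>, and the best gain is dominated by their sum, whose integral
  is \<open>2\<pi>N\<close>. A lower bound \<open>\<chi>\<close> on the best gain over \<open>P \<inter> [-\<pi>,\<pi>]\<close> therefore satisfies
  \<open>\<chi> \<mu>(P) \<le> 2\<pi>N\<close>. The bound \<open>\<chi> \<le> M\<close> is Cauchy--Schwarz at a single direction.\<close>

lemma has_integral_exp_int_mult:
  fixes j :: int
  shows "((\<lambda>x::real. exp (\<i> * of_int j * complex_of_real x)) has_integral
           (if j = 0 then complex_of_real (2 * pi) else 0)) {-pi..pi}"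
proof (cases "j = 0")
  case True
  then show ?thesis
    using has_integral_const_real[of "1::complex" "-pi" pi] by (simp add: scaleR_conv_of_real)
next
  case False
  let ?G = "\<lambda>z::complex. exp (\<i> * of_int j * z) / (\<i> * of_int j)"
  have "(?G has_field_derivative exp (\<i> * of_int j * z)) (at z)" for z
    using False by (auto intro!: derivative_eq_intros simp: field_simps)
  then have "((\<lambda>x::real. exp (\<i> * of_int j * complex_of_real x)) has_integral
               (?G (of_real pi) - ?G (of_real (-pi)))) {-pi..pi}"
    by (intro fundamental_theorem_of_calculus) (auto intro!: has_vector_derivative_real_field)
  moreover have "exp (\<i> * of_int j * complex_of_real pi) = exp (\<i> * of_int j * complex_of_real (-pi))"
    unfolding exp_eq by (rule exI[of _ j]) (simp add: algebra_simps)
  ultimately show ?thesis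
    using False by simp
qed

lemma parseval_trig_poly:
  fixes c :: "nat \<Rightarrow> complex"
  shows "((\<lambda>x::real. (cmod (\<Sum>m<M. c m * exp (\<i> * of_nat m * complex_of_real x)))\<^sup>2) has_integral
           2 * pi * (\<Sum>m<M. (cmod (c m))\<^sup>2)) {-pi..pi}"
proof -
  let ?e = "\<lambda>m x. exp (\<i> * of_nat m * complex_of_real x)"
  let ?E = "\<lambda>j x. exp (\<i> * of_int j * complex_of_real x)"
  have square_expand: "complex_of_real ((cmod (\<Sum>m<M. c m * ?e m x))\<^sup>2)
      = (\<Sum>m<M. \<Sum>n<M. (c m * cnj (c n)) * ?E (int m - int n) x)" for x
  proof -
    have "?e m x * cnj (?e n x) = ?E (int m - int n) x" for m n
      by (simp add: exp_cnj exp_add[symmetric] algebra_simps)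
    moreover have "complex_of_real ((cmod (\<Sum>m<M. c m * ?e m x))\<^sup>2)
        = (\<Sum>m<M. \<Sum>n<M. (c m * cnj (c n)) * (?e m x * cnj (?e n x)))"
      unfolding complex_norm_square
      by (simp add: sum_distrib_left sum_distrib_right cnj_sum algebra_simps) (rule sum.swap)
    ultimately show ?thesis
      by simp
  qed
  have "((\<lambda>x. \<Sum>m<M. \<Sum>n<M. (c m * cnj (c n)) * ?E (int m - int n) x) has_integral
        (\<Sum>m<M. \<Sum>n<M. (c m * cnj (c n)) * (if int m - int n = 0 then complex_of_real (2 * pi) else 0)))
        {-pi..pi}"
    by (intro has_integral_sum finite_lessThan has_integral_mult_right has_integral_exp_int_mult)
  also have "(\<Sum>m<M. \<Sum>n<M. (c m * cnj (c n)) * (if int m - int n = 0 then complex_of_real (2 * pi) else 0))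
      = (\<Sum>m<M. (c m * cnj (c m)) * complex_of_real (2 * pi))"
    by (simp add: if_distrib[where f="\<lambda>t. _ * t"] sum.delta cong: if_cong)
  also have "\<dots> = (\<Sum>m<M. complex_of_real ((cmod (c m))\<^sup>2) * complex_of_real (2 * pi))"
    by (simp only: complex_norm_square)
  also have "\<dots> = complex_of_real (2 * pi * (\<Sum>m<M. (cmod (c m))\<^sup>2))"
    by (simp only: of_real_sum[symmetric] of_real_mult[symmetric] sum_distrib_left mult.commute)
  finally have "((\<lambda>x. complex_of_real ((cmod (\<Sum>m<M. c m * ?e m x))\<^sup>2)) has_integral
        complex_of_real (2 * pi * (\<Sum>m<M. (cmod (c m))\<^sup>2))) {-pi..pi}"
    by (simp only: square_expand)
  from has_integral_Re[OF this] show ?thesis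
    by simp
qed

lemma herm_inner_steer:
  "herm_inner M g (steer M \<psi>) = (\<Sum>m<M. cnj (g m) * exp (\<i> * of_nat m * complex_of_real \<psi>))"
  unfolding herm_inner_def steer_def by (intro sum.cong) auto

lemma vnorm_square: "(vnorm M g)\<^sup>2 = (\<Sum>m<M. (cmod (g m))\<^sup>2)"
  unfolding vnorm_def by (simp add: sum_nonneg)

definition beam_gain :: "nat \<Rightarrow> (nat \<Rightarrow> complex) \<Rightarrow> real \<Rightarrow> real" where
  "beam_gain M g \<psi> = (cmod (herm_inner M g (steer M \<psi>)))\<^sup>2"

definition best_gain :: "nat \<Rightarrow> nat \<Rightarrow> (nat \<Rightarrow> nat \<Rightarrow> complex) \<Rightarrow> real \<Rightarrow> real" where
  "best_gain M N f \<psi> = Max ((\<lambda>k. beam_gain M (f k) \<psi>) ` {..<N})"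

lemma chi_eq_Inf_best_gain: "chi M P N f = Inf (best_gain M N f ` (P \<inter> {-pi..pi}))"
  unfolding chi_def best_gain_def beam_gain_def ..

lemma beam_gain_nonneg: "0 \<le> beam_gain M g \<psi>"
  unfolding beam_gain_def by simp

lemma beam_gain_le: "beam_gain M g \<psi> \<le> real M * (vnorm M g)\<^sup>2"
proof -
  have "cmod (herm_inner M g (steer M \<psi>)) \<le> (\<Sum>m<M. cmod (g m) * 1)"
    unfolding herm_inner_steer
    by (rule order_trans[OF norm_sum]) (simp add: norm_mult norm_exp_eq_Re)
  then have "beam_gain M g \<psi> \<le> (\<Sum>m<M. cmod (g m) * 1)\<^sup>2"
    unfolding beam_gain_def by (intro power_mono) auto
  also have "\<dots> \<le> (\<Sum>m<M. (cmod (g m))\<^sup>2) * (\<Sum>m<M. (1::real)\<^sup>2)"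
    by (rule Cauchy_Schwarz_ineq_sum)
  finally show ?thesis
    by (simp add: vnorm_square mult.commute)
qed

lemma beam_gain_has_integral:
  "(beam_gain M g has_integral 2 * pi * (vnorm M g)\<^sup>2) {-pi..pi}"
  using parseval_trig_poly[of "\<lambda>m. cnj (g m)" M]
  unfolding beam_gain_def herm_inner_steer vnorm_square by (simp add: fun_eq_iff)

lemma best_gain_nonneg: "0 < N \<Longrightarrow> 0 \<le> best_gain M N f \<psi>"
  unfolding best_gain_def
  by (rule order_trans[OF beam_gain_nonneg[of M "f 0" \<psi>]]) (intro Max_ge; simp)

lemma best_gain_le_sum:
  assumes "0 < N"
  shows "best_gain M N f \<psi> \<le> (\<Sum>k<N. beam_gain M (f k) \<psi>)"
proof -
  have "{..<N} \<noteq> {}"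
    using assms by auto
  then show ?thesis
    unfolding best_gain_def by (auto simp: Max_le_iff beam_gain_nonneg intro!: member_le_sum)
qed

lemma best_gain_le_dim:
  assumes "0 < N" and "\<And>k. k < N \<Longrightarrow> vnorm M (f k) = 1"
  shows "best_gain M N f \<psi> \<le> real M"
proof -
  have "{..<N} \<noteq> {}"
    using assms(1) by auto
  then show ?thesis
    unfolding best_gain_def by (auto simp: Max_le_iff assms(2) intro!: order_trans[OF beam_gain_le])
qed

lemma chi_le_best_gain:
  assumes "0 < N" and "\<psi> \<in> P \<inter> {-pi..pi}"
  shows "chi M P N f \<le> best_gain M N f \<psi>"
proof -
  have "bdd_below (best_gain M N f ` (P \<inter> {-pi..pi}))"
    unfolding bdd_below_def using best_gain_nonneg[OF assms(1)] by blast
  then show ?thesis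
    unfolding chi_eq_Inf_best_gain using assms(2) by (auto intro: cInf_lower)
qed

lemma mult_measure_le_has_integral:
  fixes H :: "'a::euclidean_space \<Rightarrow> real"
  assumes "S \<subseteq> U" and "S \<in> lmeasurable" and "(H has_integral I) U"
    and "\<And>x. x \<in> U \<Longrightarrow> 0 \<le> H x" and "\<And>x. x \<in> S \<Longrightarrow> c \<le> H x"
  shows "c * measure lebesgue S \<le> I"
proof -
  have "H absolutely_integrable_on U"
    using assms(3,4) by (intro nonnegative_absolutely_integrable_1) auto
  then have H_S: "H integrable_on S"
    using assms(1,2) set_integrable_subset absolutely_integrable_on_def by blast
  have "c * measure lebesgue S = integral S (\<lambda>x. c * 1)"
    by (simp only: lmeasure_integral[OF assms(2)] integral_mult_right)
  also have "\<dots> \<le> integral S H"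
    using assms(2,5) H_S by (intro integral_le integrable_on_const) auto
  also have "\<dots> \<le> integral U H"
    using assms H_S by (intro integral_subset_le) (auto simp: has_integral_integrable)
  also have "\<dots> = I"
    using assms(3) by (rule integral_unique)
  finally show ?thesis .
qed

text \<open>No measurability of \<open>P\<close> is needed: otherwise \<open>\<mu>(P) = 0\<close>.\<close>

lemma chi_mult_mu_P_le:
  assumes "0 < N" and "\<And>k. k < N \<Longrightarrow> vnorm M (f k) = 1"
  shows "chi M P N f * mu_P P \<le> 2 * pi * real N"
proof (cases "P \<inter> {-pi..pi} \<in> sets lebesgue")
  case True
  let ?H = "\<lambda>\<psi>. \<Sum>k<N. beam_gain M (f k) \<psi>"
  have H_integral: "(?H has_integral (\<Sum>k<N. 2 * pi)) {-pi..pi}"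
  proof (intro has_integral_sum finite_lessThan)
    fix k
    assume "k \<in> {..<N}"
    then show "(beam_gain M (f k) has_integral 2 * pi) {-pi..pi}"
      using beam_gain_has_integral[of M "f k"] assms(2) by simp
  qed
  have "P \<inter> {-pi..pi} \<in> lmeasurable"
    by (rule bounded_set_imp_lmeasurable[OF bounded_subset[OF bounded_closed_interval] True]) auto
  moreover have "chi M P N f \<le> ?H \<psi>" if "\<psi> \<in> P \<inter> {-pi..pi}" for \<psi>
    using chi_le_best_gain[OF assms(1) that] best_gain_le_sum[OF assms(1)] by (rule order_trans)
  ultimately have "chi M P N f * mu_P P \<le> (\<Sum>k<N. 2 * pi)"
    unfolding mu_P_def
    by (intro mult_measure_le_has_integral[OF _ _ H_integral]) (auto intro: sum_nonneg beam_gain_nonneg)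
  then show ?thesis
    by (simp add: mult.commute)
next
  case False
  then show ?thesis
    by (simp add: mu_P_def measure_notin_sets)
qed

theorem lemma1:
  fixes M N :: nat and d lam :: real and T :: "real set" and f :: "nat \<Rightarrow> nat \<Rightarrow> complex"
  assumes "M \<ge> 1" and "d > 0" and "lam > 0"
    and "T \<in> sets lebesgue"
    and "N \<ge> 1"
    and "\<And>k. k < N \<Longrightarrow> vnorm M (f k) = 1"
    and "phase_set d lam T \<inter> {-pi..pi} \<noteq> {}"
  shows "ereal (chi M (phase_set d lam T) N f)
           \<le> min (if mu_P (phase_set d lam T) = 0 then \<infinity>
                   else ereal (2 * pi * real N / mu_P (phase_set d lam T)))
                  (ereal (real M))"
proof -
  let ?P = "phase_set d lam T"
  have N_pos: "0 < N"
    using assms(5) by simp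
  obtain \<psi> where "\<psi> \<in> ?P \<inter> {-pi..pi}"
    using assms(7) by blast
  then have chi_le_M: "chi M ?P N f \<le> real M"
    by (rule order_trans[OF chi_le_best_gain[OF N_pos] best_gain_le_dim[OF N_pos assms(6)]])
  have "chi M ?P N f \<le> 2 * pi * real N / mu_P ?P" if "mu_P ?P \<noteq> 0"
  proof -
    have "0 < mu_P ?P"
      using that by (simp add: mu_P_def less_le)
    then show ?thesis
      using chi_mult_mu_P_le[OF N_pos assms(6)] by (simp add: pos_le_divide_eq)
  qed
  then show ?thesis
    using chi_le_M by simp
qed

end
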